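(* Let $\langle\mathcal{C},\mathcal{P}\rangle$ be a probabilistic knowledge base with $k$ equality constraints $\sum_{j=1}^{\ell}b_{ij}P(C_j\sqsubseteq D_j)=q_i$ over the axioms $C_1\sqsubseteq D_1,\dots,C_\ell\sqsubseteq D_\ell$; let $B=(b_{ij})$, $q=(q_i)$. Let $A$ be the $\ell\times 2^\ell$ matrix whose columns are all vectors $u\in\{0,1\}^\ell$, and let $$C=\begin{pmatrix}0 & B\\ A & -I_\ell\\ \mathbf{1} & 0\end{pmatrix},\qquad d=\begin{pmatrix}q\\0\\1\end{pmatrix},$$ where $\mathbf{1}$ is a row of $2^\ell$ ones. Define the cost vector $c\in\{0,1\}^{2^\ell+\ell}$ by: for a column of $C$ coming from a column $u$ of $A$, $c_j=0$ if $u$ represents a $\mathcal{C}$-satisfiable interpretation and $c_j=1$ otherwise; for each of the last $\ell$ columns, $c_j=0$. Then $\langle\mathcal{C},\mathcal{P}\rangle$ is satisfiable if and only if the linear program $\min\{c^{\top}\pi^x \mid C\pi^x=d,\ \pi^x\ge0\}$ is feasible and its optimal value is $0$.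
   Context: $\mathcal{EL}^{++}$ (without concrete domains): over countable sets $\mathsf{N_C}$ (concept names), $\mathsf{N_R}$ (role names), $\mathsf{N_I}$ (individual names), concept descriptions are $\top,\bot$, concept names, $C\sqcap D$, $\exists r.C$ ($r\in\mathsf{N_R}$) and nominals $\{a\}$ ($a\in\mathsf{N_I}$). An axiom (GCI) is $C\sqsubseteq D$; a role inclusion is $r_1\circ\cdots\circ r_k\sqsubseteq r$; a CBox is a finite set of axioms and role inclusions. An interpretation $\mathcal{I}=\langle\Delta^\mathcal{I},\cdot^\mathcal{I}\rangle$ has nonempty domain and maps concept names to subsets, role names to binary relations, individuals to elements, with $\top^\mathcal{I}=\Delta^\mathcal{I}$, $\bot^\mathcal{I}=\emptyset$, $(C\sqcap D)^\mathcal{I}=C^\mathcal{I}\cap D^\mathcal{I}$, $(\exists r.C)^\mathcal{I}=\{x\mid \exists y\in C^\mathcal{I},(x,y)\in r^\mathcal{I}\}$, $\{a\}^\mathcal{I}=\{a^\mathcal{I}\}$; $\mathcal{I}\models C\sqsubseteq D$ iff $C^\mathcal{I}\subseteq D^\mathcal{I}$, $\mathcal{I}\models r_1\circ\cdots\circ r_k\sqsubseteq r$ iff $r_1^\mathcal{I}\circ\cdots\circ r_k^\mathcal{I}\subseteq r^\mathcal{I}$, and $\mathcal{I}\models\mathcal{C}$ iff it satisfies every element of $\mathcal{C}$. Probabilistic semantics: given finitely many interpretations $\mathcal{I}_1,\dots,\mathcal{I}_m$ and a probability distribution $P$ on them, $P(C\sqsubseteq D)=\sum_{\mathcal{I}_i\models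 C\sqsubseteq D}P(\mathcal{I}_i)$. A probabilistic constraint is $b_1 P(C_1\sqsubseteq D_1)+\cdots+b_\ell P(C_\ell\sqsubseteq D_\ell)\bowtie q$ with $b_i,q\in\mathbb{Q}$, $\bowtie\in\{\le,\ge,=\}$; a PBox is a finite set of such constraints; a probabilistic knowledge base is a pair $\langle\mathcal{C},\mathcal{P}\rangle$ of a CBox and a PBox. It is satisfiable if there exist finitely many interpretations and a probability distribution $P$ over them such that every interpretation with $P(\mathcal{I}_i)>0$ satisfies $\mathcal{C}$ and all constraints of $\mathcal{P}$ hold. Given a CBox $\mathcal{C}$ and axioms $C_1\sqsubseteq D_1,\dots,C_n\sqsubseteq D_n$, a vector $u\in\{0,1\}^n$ represents a $\mathcal{C}$-satisfiable interpretation if there is an interpretation $\mathcal{I}\models\mathcal{C}$ with $u_i=1$ iff $\mathcal{I}\models C_i\sqsubseteq D_i$, for $1\le i\le n$. *)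

theory Defs
  imports Complex_Main
begin

datatype ('c, 'r, 'i) concept =
    Top
  | Bot
  | CN 'c
  | Conj "('c, 'r, 'i) concept" "('c, 'r, 'i) concept"
  | Ex 'r "('c, 'r, 'i) concept"
  | Nom 'i

datatype ('c, 'r, 'i) gci = GCI "('c, 'r, 'i) concept" "('c, 'r, 'i) concept"

datatype ('c, 'r, 'i) cbox_elem =
    Ax "('c, 'r, 'i) gci"
  | RI "'r list" 'r

record ('c, 'r, 'i, 'd) interp =
  dom :: "'d set"
  cn  :: "'c \<Rightarrow> 'd set"
  rn  :: "'r \<Rightarrow> ('d \<times> 'd) set"
  ind :: "'i \<Rightarrow> 'd"

definition is_interp :: "('c, 'r, 'i, 'd) interp \<Rightarrow> bool" where
  "is_interp I \<longleftrightarrow> dom I \<noteq> {} \<and> (\<forall>A. cn I A \<subseteq> dom I)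
     \<and> (\<forall>r. rn I r \<subseteq> dom I \<times> dom I) \<and> (\<forall>a. ind I a \<in> dom I)"

fun ext :: "('c, 'r, 'i, 'd) interp \<Rightarrow> ('c, 'r, 'i) concept \<Rightarrow> 'd set" where
  "ext I Top = dom I"
| "ext I Bot = {}"
| "ext I (CN A) = cn I A"
| "ext I (Conj C D) = ext I C \<inter> ext I D"
| "ext I (Ex r C) = {x. \<exists>y \<in> ext I C. (x, y) \<in> rn I r}"
| "ext I (Nom a) = {ind I a}"

fun role_comp :: "('c, 'r, 'i, 'd) interp \<Rightarrow> 'r list \<Rightarrow> ('d \<times> 'd) set" where
  "role_comp I [] = Id_on (dom I)"
| "role_comp I [r] = rn I r"
| "role_comp I (r # rs) = rn I r O role_comp I rs"

definition models_gci :: "('c, 'r, 'i, 'd) interp \<Rightarrow> ('c, 'r, 'i) gci \<Rightarrow> bool" where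
  "models_gci I ax = (case ax of GCI C D \<Rightarrow> ext I C \<subseteq> ext I D)"

fun models_elem :: "('c, 'r, 'i, 'd) interp \<Rightarrow> ('c, 'r, 'i) cbox_elem \<Rightarrow> bool" where
  "models_elem I (Ax ax) = models_gci I ax"
| "models_elem I (RI rs r) = (role_comp I rs \<subseteq> rn I r)"

definition models_cbox :: "('c, 'r, 'i, 'd) interp \<Rightarrow> ('c, 'r, 'i) cbox_elem set \<Rightarrow> bool" where
  "models_cbox I CB \<longleftrightarrow> (\<forall>e \<in> CB. models_elem I e)"

datatype rel = Leq | Geq | Eq

datatype ('c, 'r, 'i) pconstr = PC "(rat \<times> ('c, 'r, 'i) gci) list" rel rat

definition prob_ax :: "nat \<Rightarrow> (nat \<Rightarrow> ('c, 'r, 'i, 'd) interp) \<Rightarrow> (nat \<Rightarrow> real)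
    \<Rightarrow> ('c, 'r, 'i) gci \<Rightarrow> real" where
  "prob_ax m Is p ax = (\<Sum>i \<in> {i. i < m \<and> models_gci (Is i) ax}. p i)"

fun rel_holds :: "rel \<Rightarrow> real \<Rightarrow> real \<Rightarrow> bool" where
  "rel_holds Leq x y = (x \<le> y)"
| "rel_holds Geq x y = (x \<ge> y)"
| "rel_holds Eq x y = (x = y)"

fun constr_holds :: "nat \<Rightarrow> (nat \<Rightarrow> ('c, 'r, 'i, 'd) interp) \<Rightarrow> (nat \<Rightarrow> real)
    \<Rightarrow> ('c, 'r, 'i) pconstr \<Rightarrow> bool" where
  "constr_holds m Is p (PC ts rl q) =
     rel_holds rl (\<Sum>(b, ax) \<leftarrow> ts. real_of_rat b * prob_ax m Is p ax) (real_of_rat q)"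

definition pkb_sat :: "'d itself \<Rightarrow> ('c, 'r, 'i) cbox_elem set \<Rightarrow> ('c, 'r, 'i) pconstr set \<Rightarrow> bool" where
  "pkb_sat (_ :: 'd itself) CB PB \<longleftrightarrow>
     (\<exists>(m :: nat) (Is :: nat \<Rightarrow> ('c, 'r, 'i, 'd) interp) (p :: nat \<Rightarrow> real).
        (\<forall>i < m. is_interp (Is i) \<and> p i \<ge> 0) \<and> (\<Sum>i < m. p i) = 1
        \<and> (\<forall>i < m. p i > 0 \<longrightarrow> models_cbox (Is i) CB)
        \<and> (\<forall>pc \<in> PB. constr_holds m Is p pc))"

definition represents_sat :: "'d itself \<Rightarrow> ('c, 'r, 'i) cbox_elem set
    \<Rightarrow> (nat \<Rightarrow> ('c, 'r, 'i) gci) \<Rightarrow> nat \<Rightarrow> (nat \<Rightarrow> real) \<Rightarrow> bool" where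
  "represents_sat (_ :: 'd itself) CB axs l u \<longleftrightarrow>
     (\<exists>I :: ('c, 'r, 'i, 'd) interp. is_interp I \<and> models_cbox I CB
        \<and> (\<forall>i < l. u i = 1 \<longleftrightarrow> models_gci I (axs i)))"

text \<open>Column t < 2^l of A is the 0/1 vector whose i-th entry is bit i of t;
  this enumerates all of {0,1}^l exactly once.\<close>
definition Acol :: "nat \<Rightarrow> nat \<Rightarrow> real" where
  "Acol t i = (if odd (t div 2 ^ i) then 1 else 0)"

text \<open>The matrix C (rows: k rows [0 | B], l rows [A | -I], one row [1 | 0];
  columns: 2^l columns for A, then l columns), and right-hand side d.\<close>
definition Cmat :: "nat \<Rightarrow> nat \<Rightarrow> (nat \<Rightarrow> nat \<Rightarrow> rat) \<Rightarrow> nat \<Rightarrow> nat \<Rightarrow> real" where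
  "Cmat k l B i j =
     (if i < k then (if j < 2 ^ l then 0 else real_of_rat (B i (j - 2 ^ l)))
      else if i < k + l then
        (if j < 2 ^ l then Acol j (i - k) else if j - 2 ^ l = i - k then -1 else 0)
      else (if j < 2 ^ l then 1 else 0))"

definition dvec :: "nat \<Rightarrow> nat \<Rightarrow> (nat \<Rightarrow> rat) \<Rightarrow> nat \<Rightarrow> real" where
  "dvec k l q i = (if i < k then real_of_rat (q i) else if i < k + l then 0 else 1)"

definition cvec :: "'d itself \<Rightarrow> ('c, 'r, 'i) cbox_elem set \<Rightarrow> (nat \<Rightarrow> ('c, 'r, 'i) gci)
    \<Rightarrow> nat \<Rightarrow> nat \<Rightarrow> real" where
  "cvec T CB axs l j =
     (if j < 2 ^ l then (if represents_sat T CB axs l (Acol j) then 0 else 1) else 0)"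

definition lp_feasible_pt :: "nat \<Rightarrow> nat \<Rightarrow> (nat \<Rightarrow> nat \<Rightarrow> real) \<Rightarrow> (nat \<Rightarrow> real)
    \<Rightarrow> (nat \<Rightarrow> real) \<Rightarrow> bool" where
  "lp_feasible_pt m n M d x \<longleftrightarrow>
     (\<forall>j < n. x j \<ge> 0) \<and> (\<forall>i < m. (\<Sum>j < n. M i j * x j) = d i)"

definition lp_min_value :: "nat \<Rightarrow> nat \<Rightarrow> (nat \<Rightarrow> real) \<Rightarrow> (nat \<Rightarrow> nat \<Rightarrow> real)
    \<Rightarrow> (nat \<Rightarrow> real) \<Rightarrow> real \<Rightarrow> bool" where
  "lp_min_value m n c M d v \<longleftrightarrow>
     (\<exists>x. lp_feasible_pt m n M d x \<and> (\<Sum>j < n. c j * x j) = v)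
     \<and> (\<forall>x. lp_feasible_pt m n M d x \<longrightarrow> (\<Sum>j < n. c j * x j) \<ge> v)"

end

theory Submission imports Defs begin

text \<open>Grouping the interpretations of a satisfying distribution by which of the \<ell> axioms
  they satisfy turns it into a distribution on the columns of A with the same axiom
  probabilities; interpretations of positive weight satisfy the CBox, so their columns have
  cost 0. Conversely, an optimal solution of cost 0 puts weight only on columns u that
  represent a CBox-satisfiable interpretation, and choosing one such interpretation per
  column gives a model of the knowledge base. The rows [A | -I] force the last \<ell> variables
  of the LP to be the axiom probabilities.\<close>

lemma Acol_eq_of_bool_bit: "Acol t i = of_bool (bit t i)"
  by (simp add: Acol_def bit_iff_odd)

definition column_of :: "(nat \<Rightarrow> bool) \<Rightarrow> nat \<Rightarrow> nat" where
  "column_of P l = horner_sum of_bool 2 (map P [0..<l])"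

lemma column_of_less: "column_of P l < 2 ^ l"
  using horner_sum_bound[of "map P [0..<l]"] by (simp add: column_of_def)

lemma Acol_column_of: "i < l \<Longrightarrow> Acol (column_of P l) i = of_bool (P i)"
  by (simp add: Acol_eq_of_bool_bit column_of_def bit_horner_sum_bit_iff)

lemma sum_lessThan_add:
  "(\<Sum>j<a + b. f j) = (\<Sum>j<a. f j) + (\<Sum>j<b. f (a + j) :: 'a :: comm_monoid_add)" for b :: nat
  by (induction b) (simp_all add: add.assoc)

lemma sum_group_lessThan:
  fixes f :: "nat \<Rightarrow> 'a :: comm_semiring_0" and p :: "nat \<Rightarrow> 'a"
  assumes "\<And>i. i < m \<Longrightarrow> g i < N"
  shows "(\<Sum>i<m. f (g i) * p i) = (\<Sum>t<N. f t * sum p {i. i < m \<and> g i = t})"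
proof -
  have "(\<Sum>i<m. f (g i) * p i) = (\<Sum>t<N. \<Sum>i\<in>{i \<in> {..<m}. g i = t}. f (g i) * p i)"
    by (rule sum.group[symmetric]) (use assms in auto)
  also have "\<dots> = (\<Sum>t<N. f t * sum p {i. i < m \<and> g i = t})"
    unfolding sum_distrib_left by (intro sum.cong refl) auto
  finally show ?thesis .
qed

lemma lp_min_value_zero_iff:
  assumes "\<And>j. j < n \<Longrightarrow> c j \<ge> 0"
  shows "lp_min_value m n c M d 0 \<longleftrightarrow>
    (\<exists>x. lp_feasible_pt m n M d x \<and> (\<forall>j<n. c j * x j = 0))"
proof
  assume "lp_min_value m n c M d 0"
  then obtain x where x: "lp_feasible_pt m n M d x" and cost: "(\<Sum>j<n. c j * x j) = 0"
    unfolding lp_min_value_def by blast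
  have "\<forall>j\<in>{..<n}. c j * x j = 0"
    using cost x assms by (subst sum_nonneg_eq_0_iff[symmetric]) (auto simp: lp_feasible_pt_def)
  with x show "\<exists>x. lp_feasible_pt m n M d x \<and> (\<forall>j<n. c j * x j = 0)" by auto
next
  assume "\<exists>x. lp_feasible_pt m n M d x \<and> (\<forall>j<n. c j * x j = 0)"
  then obtain x where "lp_feasible_pt m n M d x" "\<forall>j<n. c j * x j = 0" by blast
  moreover from this have "(\<Sum>j<n. c j * x j) = 0" by (intro sum.neutral) simp
  ultimately show "lp_min_value m n c M d 0"
    using assms unfolding lp_min_value_def lp_feasible_pt_def by (auto intro!: sum_nonneg)
qed

lemma Cmat_row_B:
  "i < k \<Longrightarrow> (\<Sum>j<2 ^ l + l. Cmat k l B i j * x j) = (\<Sum>j<l. real_of_rat (B i j) * x (2 ^ l + j))"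
  by (simp add: sum_lessThan_add Cmat_def)

lemma Cmat_row_A:
  assumes "j < l"
  shows "(\<Sum>j'<2 ^ l + l. Cmat k l B (k + j) j' * x j') = (\<Sum>t<2 ^ l. Acol t j * x t) - x (2 ^ l + j)"
proof -
  have "(\<Sum>j'<l. (if j' = j then -1 else 0) * x (2 ^ l + j'))
      = (\<Sum>j'<l. if j' = j then - x (2 ^ l + j') else 0)"
    by (intro sum.cong) auto
  also have "\<dots> = - x (2 ^ l + j)"
    using assms by simp
  finally show ?thesis
    using assms by (simp add: sum_lessThan_add Cmat_def)
qed

lemma Cmat_row_one: "(\<Sum>j<2 ^ l + l. Cmat k l B (k + l) j * x j) = (\<Sum>t<2 ^ l. x t)"
  by (simp add: sum_lessThan_add Cmat_def)

lemma lp_feasible_pt_Cmat_iff: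
  "lp_feasible_pt (k + l + 1) (2 ^ l + l) (Cmat k l B) (dvec k l q) x \<longleftrightarrow>
     (\<forall>j<2 ^ l + l. x j \<ge> 0)
     \<and> (\<forall>i<k. (\<Sum>j<l. real_of_rat (B i j) * x (2 ^ l + j)) = real_of_rat (q i))
     \<and> (\<forall>j<l. x (2 ^ l + j) = (\<Sum>t<2 ^ l. Acol t j * x t))
     \<and> (\<Sum>t<2 ^ l. x t) = 1"
proof -
  have "(\<forall>i<k + l + 1. P i) \<longleftrightarrow> (\<forall>i<k. P i) \<and> (\<forall>j<l. P (k + j)) \<and> P (k + l)" for P
  proof -
    have "i < k + l + 1 \<longleftrightarrow> i < k \<or> (\<exists>j<l. i = k + j) \<or> i = k + l" for i
      by presburger
    then show ?thesis by auto
  qed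
  then show ?thesis
    by (simp add: lp_feasible_pt_def Cmat_row_B Cmat_row_A Cmat_row_one dvec_def)
      (auto simp: algebra_simps)
qed

lemma constr_holds_Eq_iff:
  "constr_holds m Is p (PC [(b j, axs j). j \<leftarrow> [0..<l]] Eq r) \<longleftrightarrow>
     (\<Sum>j<l. real_of_rat (b j) * prob_ax m Is p (axs j)) = real_of_rat r"
proof -
  have "(\<Sum>(b, ax)\<leftarrow>[(b j, axs j). j \<leftarrow> [0..<l]]. real_of_rat b * prob_ax m Is p ax)
      = (\<Sum>j<l. real_of_rat (b j) * prob_ax m Is p (axs j))"
    by (induction l) auto
  then show ?thesis by simp
qed

lemma prob_ax_eq_sum: "prob_ax m Is p ax = (\<Sum>i<m. of_bool (models_gci (Is i) ax) * p i)"
  by (simp add: prob_ax_def sum.inter_filter[symmetric] Collect_conj_eq lessThan_def)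

lemma ex_is_interp: "\<exists>I :: ('c, 'r, 'i, 'd) interp. is_interp I"
proof
  show "is_interp \<lparr>dom = {undefined}, cn = \<lambda>_. {}, rn = \<lambda>_. {}, ind = \<lambda>_. undefined\<rparr>"
    by (simp add: is_interp_def)
qed

lemma represents_sat_Acol_iff:
  "represents_sat TYPE('d) CB axs l (Acol t) \<longleftrightarrow>
     (\<exists>I :: ('c, 'r, 'i, 'd) interp. is_interp I \<and> models_cbox I CB
        \<and> (\<forall>j<l. Acol t j = of_bool (models_gci I (axs j))))"
  by (simp add: represents_sat_def Acol_eq_of_bool_bit of_bool_eq_iff)

lemma represents_sat_column_of:
  fixes I :: "('c, 'r, 'i, 'd) interp"
  assumes "is_interp I" and "models_cbox I CB"
  shows "represents_sat TYPE('d) CB axs l (Acol (column_of (\<lambda>j. models_gci I (axs j)) l))"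
  using assms by (auto simp: represents_sat_Acol_iff Acol_column_of)

lemma lp_solution_of_distribution:
  fixes Is :: "nat \<Rightarrow> ('c, 'r, 'i, 'd) interp"
  assumes interp: "\<forall>i<m. is_interp (Is i) \<and> p i \<ge> 0" and total: "(\<Sum>i<m. p i) = 1"
    and models: "\<forall>i<m. p i > 0 \<longrightarrow> models_cbox (Is i) CB"
    and constrs: "\<forall>i<k. (\<Sum>j<l. real_of_rat (B i j) * prob_ax m Is p (axs j)) = real_of_rat (q i)"
  obtains x where "lp_feasible_pt (k + l + 1) (2 ^ l + l) (Cmat k l B) (dvec k l q) x"
    and "\<forall>j<2 ^ l + l. cvec TYPE('d) CB axs l j * x j = 0"
proof
  define col where "col i = column_of (\<lambda>j. models_gci (Is i) (axs j)) l" for i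
  define w where "w t = sum p {i. i < m \<and> col i = t}" for t
  define x where "x t = (if t < 2 ^ l then w t else prob_ax m Is p (axs (t - 2 ^ l)))" for t
  have col_less: "col i < 2 ^ l" for i
    by (simp add: col_def column_of_less)
  have prob: "prob_ax m Is p (axs j) = (\<Sum>t<2 ^ l. Acol t j * w t)" if "j < l" for j
  proof -
    have "prob_ax m Is p (axs j) = (\<Sum>i<m. Acol (col i) j * p i)"
      using that by (simp add: prob_ax_eq_sum col_def Acol_column_of)
    also have "\<dots> = (\<Sum>t<2 ^ l. Acol t j * w t)"
      unfolding w_def using col_less by (rule sum_group_lessThan)
    finally show ?thesis .
  qed
  have "(\<Sum>t<2 ^ l. w t) = 1"
    using sum_group_lessThan[of m col "2 ^ l" "\<lambda>_. 1" p] col_less total by (simp add: w_def)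
  moreover have "x t \<ge> 0" for t
    using interp by (auto simp: x_def w_def prob_ax_def intro!: sum_nonneg)
  ultimately show "lp_feasible_pt (k + l + 1) (2 ^ l + l) (Cmat k l B) (dvec k l q) x"
    using constrs prob unfolding lp_feasible_pt_Cmat_iff by (simp add: x_def)
  have "w t = 0" if "\<not> represents_sat TYPE('d) CB axs l (Acol t)" for t
  proof -
    have "p i = 0" if "i < m" and "col i = t" for i
      using interp models represents_sat_column_of \<open>\<not> represents_sat TYPE('d) CB axs l (Acol t)\<close> that
      unfolding col_def by (metis order_less_le)
    then show ?thesis by (simp add: w_def)
  qed
  then show "\<forall>j<2 ^ l + l. cvec TYPE('d) CB axs l j * x j = 0"
    by (simp add: cvec_def x_def)
qed

lemma lp_solution_of_pkb_model:
  fixes CB :: "('c, 'r, 'i) cbox_elem set" and axs :: "nat \<Rightarrow> ('c, 'r, 'i) gci"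
  assumes "pkb_sat TYPE('d) CB {PC [(B i j, axs j). j \<leftarrow> [0..<l]] Eq (q i) | i. i < k}"
  shows "\<exists>x. lp_feasible_pt (k + l + 1) (2 ^ l + l) (Cmat k l B) (dvec k l q) x
    \<and> (\<forall>j<2 ^ l + l. cvec TYPE('d) CB axs l j * x j = 0)"
proof -
  obtain m and Is :: "nat \<Rightarrow> ('c, 'r, 'i, 'd) interp" and p
    where model: "\<forall>i<m. is_interp (Is i) \<and> p i \<ge> 0" "(\<Sum>i<m. p i) = 1"
      "\<forall>i<m. p i > 0 \<longrightarrow> models_cbox (Is i) CB"
      and constrs: "\<forall>pc \<in> {PC [(B i j, axs j). j \<leftarrow> [0..<l]] Eq (q i) | i. i < k}.
        constr_holds m Is p pc"
    using assms unfolding pkb_sat_def by blast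
  from constrs have "\<forall>i<k. (\<Sum>j<l. real_of_rat (B i j) * prob_ax m Is p (axs j)) = real_of_rat (q i)"
    by (auto simp flip: constr_holds_Eq_iff)
  with model obtain x where "lp_feasible_pt (k + l + 1) (2 ^ l + l) (Cmat k l B) (dvec k l q) x"
    and "\<forall>j<2 ^ l + l. cvec TYPE('d) CB axs l j * x j = 0"
    by (rule lp_solution_of_distribution)
  then show ?thesis by blast
qed

lemma pkb_model_of_lp_solution:
  fixes CB :: "('c, 'r, 'i) cbox_elem set" and axs :: "nat \<Rightarrow> ('c, 'r, 'i) gci"
  assumes feasible: "lp_feasible_pt (k + l + 1) (2 ^ l + l) (Cmat k l B) (dvec k l q) x"
    and cost: "\<forall>j<2 ^ l + l. cvec TYPE('d) CB axs l j * x j = 0"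
  shows "pkb_sat TYPE('d) CB {PC [(B i j, axs j). j \<leftarrow> [0..<l]] Eq (q i) | i. i < k}"
proof -
  from feasible have nonneg: "\<forall>j<2 ^ l + l. x j \<ge> 0"
    and constrs: "\<forall>i<k. (\<Sum>j<l. real_of_rat (B i j) * x (2 ^ l + j)) = real_of_rat (q i)"
    and probs: "\<forall>j<l. x (2 ^ l + j) = (\<Sum>t<2 ^ l. Acol t j * x t)"
    and total: "(\<Sum>t<2 ^ l. x t) = 1"
    unfolding lp_feasible_pt_Cmat_iff by blast+
  have "\<exists>I :: ('c, 'r, 'i, 'd) interp. is_interp I \<and> (t < 2 ^ l \<and> 0 < x t \<longrightarrow>
      models_cbox I CB \<and> (\<forall>j<l. Acol t j = of_bool (models_gci I (axs j))))" for t
  proof (cases "t < 2 ^ l \<and> 0 < x t")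
    case True
    with cost have "represents_sat TYPE('d) CB axs l (Acol t)"
      by (auto simp: cvec_def split: if_splits)
    then show ?thesis by (auto simp: represents_sat_Acol_iff)
  qed (use ex_is_interp in blast)
  then obtain Is :: "nat \<Rightarrow> ('c, 'r, 'i, 'd) interp" where interp: "\<And>t. is_interp (Is t)"
    and Is: "\<And>t. t < 2 ^ l \<Longrightarrow> 0 < x t \<Longrightarrow>
      models_cbox (Is t) CB \<and> (\<forall>j<l. Acol t j = of_bool (models_gci (Is t) (axs j)))"
    by metis
  have prob: "prob_ax (2 ^ l) Is x (axs j) = x (2 ^ l + j)" if "j < l" for j
  proof -
    have agree: "of_bool (models_gci (Is t) (axs j)) * x t = Acol t j * x t" if "t < 2 ^ l" for t
    proof (cases "x t = 0")
      case False
      moreover have "x t \<ge> 0" using nonneg that by (simp add: trans_less_add1)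
      ultimately have "0 < x t" by simp
      with Is[OF that] \<open>j < l\<close> show ?thesis by simp
    qed simp
    have "prob_ax (2 ^ l) Is x (axs j) = (\<Sum>t<2 ^ l. of_bool (models_gci (Is t) (axs j)) * x t)"
      by (rule prob_ax_eq_sum)
    also have "\<dots> = (\<Sum>t<2 ^ l. Acol t j * x t)"
      using agree by (intro sum.cong) auto
    finally show ?thesis
      using probs that by simp
  qed
  have constr: "constr_holds (2 ^ l) Is x (PC [(B i j, axs j). j \<leftarrow> [0..<l]] Eq (q i))"
    if "i < k" for i
    unfolding constr_holds_Eq_iff using constrs prob that by simp
  show ?thesis
    unfolding pkb_sat_def using interp nonneg total Is constr
    by (intro exI[of _ "2 ^ l"] exI[of _ Is] exI[of _ x]) (auto simp: trans_less_add1)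
qed

theorem lemma6:
  fixes CB :: "('c, 'r, 'i) cbox_elem set"
    and axs :: "nat \<Rightarrow> ('c, 'r, 'i) gci"
    and B :: "nat \<Rightarrow> nat \<Rightarrow> rat" and q :: "nat \<Rightarrow> rat"
    and k l :: nat
  assumes "finite CB"
  shows "pkb_sat TYPE('d) CB {PC [(B i j, axs j). j \<leftarrow> [0..<l]] Eq (q i) | i. i < k}
     \<longleftrightarrow> lp_min_value (k + l + 1) (2 ^ l + l) (cvec TYPE('d) CB axs l)
            (Cmat k l B) (dvec k l q) 0"
proof -
  have "lp_min_value (k + l + 1) (2 ^ l + l) (cvec TYPE('d) CB axs l) (Cmat k l B) (dvec k l q) 0
    \<longleftrightarrow> (\<exists>x. lp_feasible_pt (k + l + 1) (2 ^ l + l) (Cmat k l B) (dvec k l q) x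
          \<and> (\<forall>j<2 ^ l + l. cvec TYPE('d) CB axs l j * x j = 0))"
    by (rule lp_min_value_zero_iff) (simp add: cvec_def)
  then show ?thesis
    using lp_solution_of_pkb_model pkb_model_of_lp_solution by blast
qed

end
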